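(* Let $h$ be a real analytic function with $h(r)>0$ for $r>0$ and $h^2(r)=r^2\varphi(r)$ with $\varphi$ real analytic and $\varphi(0)=1$. There are no solutions $v$ of $\ddot v=\frac{2}{h^2}(e^v-1)$ on $[0,\infty)$ with $v(0)=\dot v(0)=0$ and $\lim_{r\to\infty}r^{-k}e^{v(r)}=0$ for some $k\in\mathbb{Z}$, such that $\ddot v(0)=b>0$.
   Context: Dots denote derivatives with respect to $r$. *)

theory Defs
  imports "HOL-Analysis.Analysis"
begin

definition real_analytic_on :: "(real \<Rightarrow> real) \<Rightarrow> real set \<Rightarrow> bool" where
  "real_analytic_on f S \<longleftrightarrow>
     (\<forall>x\<in>S. \<exists>e>0. \<exists>a::nat \<Rightarrow> real.
        \<forall>y. \<bar>y - x\<bar> < e \<longrightarrow> (\<lambda>n. a n * (y - x) ^ n) sums f y)"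

end

theory Submission
  imports Defs "HOL-Real_Asymp.Real_Asymp"
begin

text \<open>Where \<open>v > 0\<close> the equation gives \<open>v'' > 0\<close>, since \<open>h > 0\<close> and \<open>exp v > 1\<close>.
Starting from \<open>v(0) = v'(0) = 0 < v''(0)\<close>, the first point \<open>t > 0\<close> with \<open>v'(t) \<le> 0\<close> would
follow a stretch on which \<open>v' > 0\<close>, hence \<open>v > 0\<close> and \<open>v'' > 0\<close>, forcing \<open>v'(t) > 0\<close>.
So \<open>v > 0\<close> and \<open>v'' > 0\<close> on \<open>(0, \<infinity>)\<close>; then \<open>v\<close> lies above a tangent line of positive
slope, and \<open>exp v\<close> grows exponentially, faster than any power of \<open>r\<close>.\<close>

lemma MVT_atLeast:
  fixes f f' :: "real \<Rightarrow> real"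
  assumes deriv: "\<And>r. r \<ge> a \<Longrightarrow> (f has_real_derivative f' r) (at r within {a..})"
    and "a \<le> x" "x < y"
  shows "\<exists>z. x < z \<and> z < y \<and> f y - f x = (y - x) * f' z"
proof -
  have "(f has_derivative (*) (f' r)) (at r within {x..y})" if "x \<le> r" "r \<le> y" for r
  proof -
    have "(f has_real_derivative f' r) (at r within {x..y})"
      using \<open>a \<le> x\<close> that by (intro DERIV_subset[OF deriv]) auto
    then show ?thesis
      by (rule has_field_derivative_imp_has_derivative)
  qed
  from mvt_simple[OF \<open>x < y\<close> this] obtain z where "z \<in> {x<..<y}" "f y - f x = f' z * (y - x)"
    by blast
  then show ?thesis
    by (auto simp: mult.commute)
qed

lemma deriv_pos_of_second_deriv_pos_where_pos:
  fixes v v' v'' :: "real \<Rightarrow> real"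
  assumes D1: "\<And>r. r \<ge> 0 \<Longrightarrow> (v has_real_derivative v' r) (at r within {0..})"
    and D2: "\<And>r. r \<ge> 0 \<Longrightarrow> (v' has_real_derivative v'' r) (at r within {0..})"
    and v0: "v 0 = 0" and v'0: "v' 0 = 0" and v''0: "v'' 0 > 0"
    and convex_where_pos: "\<And>r. r > 0 \<Longrightarrow> v r > 0 \<Longrightarrow> v'' r > 0"
    and "R > 0"
  shows "v' R > 0"
proof (rule ccontr)
  assume "\<not> v' R > 0"
  obtain d where "d > 0" and "\<forall>h>0. 0 + h \<in> {0..} \<longrightarrow> h < d \<longrightarrow> v' 0 < v' (0 + h)"
    using has_real_derivative_pos_inc_right[OF D2[of 0] v''0] by blast
  then have d: "d > 0" "\<And>r. 0 < r \<Longrightarrow> r < d \<Longrightarrow> v' r > 0"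
    using v'0 by auto
  define S where "S = {d..R} \<inter> v' -` {..0}"
  have "continuous_on {0..} v'"
    using D2 by (metis DERIV_continuous atLeast_iff continuous_on_eq_continuous_within)
  then have "closed S"
    unfolding S_def using d by (intro continuous_closed_preimage[OF continuous_on_subset]) auto
  then have "compact S"
    by (simp add: compact_eq_bounded_closed S_def bounded_Int)
  moreover have "R \<in> S"
  proof -
    have "d \<le> R"
      using d(2)[of R] \<open>\<not> v' R > 0\<close> \<open>R > 0\<close> by (meson not_le)
    with \<open>\<not> v' R > 0\<close> show ?thesis
      by (simp add: S_def)
  qed
  ultimately obtain t where "t \<in> S" and t_least: "\<And>r. r \<in> S \<Longrightarrow> t \<le> r"
    using compact_attains_inf[of S] by blast
  then have t: "t \<ge> d" "v' t \<le> 0"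
    unfolding S_def by auto
  have v'_pos: "v' r > 0" if r: "0 < r" "r < t" for r
  proof (cases "r < d")
    case False
    show ?thesis
    proof (rule ccontr)
      assume "\<not> v' r > 0"
      with False r \<open>t \<in> S\<close> have "r \<in> S"
        by (auto simp: S_def)
      with t_least[of r] r show False
        by simp
    qed
  qed (use d r in auto)
  have v_pos: "v r > 0" if r: "0 < r" "r \<le> t" for r
  proof -
    obtain z where "0 < z" "z < r" "v r - v 0 = (r - 0) * v' z"
      using MVT_atLeast[OF D1, of 0 r] r by auto
    with v'_pos[of z] v0 r show ?thesis by simp
  qed
  obtain z where z: "0 < z" "z < t" "v' t - v' 0 = (t - 0) * v'' z"
    using MVT_atLeast[OF D2, of 0 t] t d by auto
  have "v'' z > 0"
    using convex_where_pos v_pos z by simp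
  with z v'0 have "v' t > 0"
    by (simp add: zero_less_mult_iff)
  with t show False
    by simp
qed

lemma tangent_line_below_convex:
  fixes v v' v'' :: "real \<Rightarrow> real"
  assumes D1: "\<And>r. r \<ge> a \<Longrightarrow> (v has_real_derivative v' r) (at r within {a..})"
    and D2: "\<And>r. r \<ge> a \<Longrightarrow> (v' has_real_derivative v'' r) (at r within {a..})"
    and convex: "\<And>r. r > a \<Longrightarrow> v'' r \<ge> 0"
    and "r \<ge> a"
  shows "v r \<ge> v a + (r - a) * v' a"
proof (cases "r = a")
  case False
  then obtain z where z: "a < z" "z < r" "v r - v a = (r - a) * v' z"
    using MVT_atLeast[OF D1, of a r] \<open>r \<ge> a\<close> by auto
  obtain w where "a < w" "v' z - v' a = (z - a) * v'' w"
    using MVT_atLeast[OF D2, of a z] z by auto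
  with convex[of w] z have "v' z \<ge> v' a"
    by (metis diff_ge_0_iff_ge less_eq_real_def mult_nonneg_nonneg)
  with z show ?thesis
    by (smt (verit) mult_left_mono)
qed simp

lemma exp_linear_growth_beats_powi:
  fixes v :: "real \<Rightarrow> real" and k :: int
  assumes "c > 0" and linear: "\<forall>\<^sub>F r in at_top. v r \<ge> a + c * r"
  shows "\<not> ((\<lambda>r. r powi k * exp (v r)) \<longlongrightarrow> 0) at_top"
proof
  assume lim0: "((\<lambda>r. r powi k * exp (v r)) \<longlongrightarrow> 0) at_top"
  have "filterlim (\<lambda>r. r powr real_of_int k * exp (a + c * r)) at_top at_top"
    using \<open>c > 0\<close> by real_asymp
  moreover have "\<forall>\<^sub>F r in at_top. r powr real_of_int k * exp (a + c * r) \<le> r powi k * exp (v r)"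
    using linear eventually_gt_at_top[of 0]
  proof eventually_elim
    case (elim r)
    then show ?case
      by (simp add: powr_real_of_int' mult_left_mono)
  qed
  ultimately have "filterlim (\<lambda>r. r powi k * exp (v r)) at_top at_top"
    by (rule filterlim_at_top_mono)
  with lim0 show False
    using not_tendsto_and_filterlim_at_infinity[OF trivial_limit_at_top_linorder]
          filterlim_at_top_imp_at_infinity by blast
qed

theorem mainTheorem14:
  fixes h \<phi> :: "real \<Rightarrow> real"
  assumes h_an: "real_analytic_on h {0..}"
    and h_pos: "\<And>r. r > 0 \<Longrightarrow> h r > 0"
    and phi_an: "real_analytic_on \<phi> {0..}"
    and h_sq: "\<And>r. r \<ge> 0 \<Longrightarrow> (h r)\<^sup>2 = r\<^sup>2 * \<phi> r"
    and phi0: "\<phi> 0 = 1"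
  shows "\<not> (\<exists>(v::real \<Rightarrow> real) v' v'' (b::real).
      (\<forall>r\<ge>0. (v has_real_derivative v' r) (at r within {0..})) \<and>
      (\<forall>r\<ge>0. (v' has_real_derivative v'' r) (at r within {0..})) \<and>
      (\<forall>r>0. v'' r = 2 / (h r)\<^sup>2 * (exp (v r) - 1)) \<and>
      v 0 = 0 \<and> v' 0 = 0 \<and>
      (\<exists>k::int. ((\<lambda>r. r powi (- k) * exp (v r)) \<longlongrightarrow> 0) at_top) \<and>
      v'' 0 = b \<and> b > 0)"
proof (intro notI, elim exE conjE)
  fix v v' v'' :: "real \<Rightarrow> real" and b :: real and k :: int
  assume D1: "\<forall>r\<ge>0. (v has_real_derivative v' r) (at r within {0..})"
    and D2: "\<forall>r\<ge>0. (v' has_real_derivative v'' r) (at r within {0..})"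
    and ode: "\<forall>r>0. v'' r = 2 / (h r)\<^sup>2 * (exp (v r) - 1)"
    and v0: "v 0 = 0" and v'0: "v' 0 = 0"
    and lim: "((\<lambda>r. r powi (- k) * exp (v r)) \<longlongrightarrow> 0) at_top"
    and "v'' 0 = b" "b > 0"
  have convex_where_pos: "v'' r > 0" if "r > 0" "v r > 0" for r
    using ode h_pos[of r] that by simp
  have v'_pos: "v' r > 0" if "r > 0" for r
    using deriv_pos_of_second_deriv_pos_where_pos[of v v' v''] D1 D2 v0 v'0
      \<open>v'' 0 = b\<close> \<open>b > 0\<close> convex_where_pos that by blast
  have v_pos: "v r > 0" if "r > 0" for r
    using MVT_atLeast[of 0 v v' 0 r] D1 v0 v'_pos that by force
  have "v r \<ge> v 1 + (r - 1) * v' 1" if "r \<ge> 1" for r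
    using tangent_line_below_convex[of 1 v v' v'' r] D1 D2 convex_where_pos v_pos that
    by (smt (verit) DERIV_subset atLeast_subset_iff less_imp_le)
  then have "\<forall>\<^sub>F r in at_top. v r \<ge> (v 1 - v' 1) + v' 1 * r"
    by (intro eventually_at_top_linorderI[of 1]) (simp add: algebra_simps)
  with exp_linear_growth_beats_powi[OF v'_pos[of 1]] lim show False
    by simp
qed

end
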